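(* Let $(S,\mathfrak{n})$ be a complete Noetherian local ring, $I$ an ideal of $S$, and $x_1,\dots,x_r$ a minimal generating sequence of $I$ which is $\Gamma$-expandable for a standard set $\Gamma$ of monomials in $k[T_1,\dots,T_r]$. Then $T_1,\dots,T_r\in\Gamma$.
   Context: A standard set is a set of monomials closed under taking divisors. For $u=T_1^{a_1}\cdots T_r^{a_r}$, $u(x)=x_1^{a_1}\cdots x_r^{a_r}$. A lifting is a map $\sigma:S/I\to S$ with $\sigma(0)=0$ and $\pi\circ\sigma=\mathrm{id}_{S/I}$. The sequence $x_1,\dots,x_r$ is $\Gamma$-expandable if for every lifting $\sigma$, every $f\in S$ has a unique representation $f=\sum_{u\in\Gamma}f_uu(x)$ (convergent sum) with all $f_u\in\sigma(S/I)$. *)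

theory Defs
  imports "HOL-Algebra.Algebra"
begin

primrec ideal_pow :: "('a, 'b) ring_scheme \<Rightarrow> 'a set \<Rightarrow> nat \<Rightarrow> 'a set" where
  "ideal_pow R N 0 = carrier R"
| "ideal_pow R N (Suc k) = ideal_prod R N (ideal_pow R N k)"

definition local_ring_with :: "('a, 'b) ring_scheme \<Rightarrow> 'a set \<Rightarrow> bool" where
  "local_ring_with R N \<longleftrightarrow> cring R \<and> maximalideal N R \<and>
     (\<forall>M. maximalideal M R \<longrightarrow> M = N)"

definition adic_complete :: "('a, 'b) ring_scheme \<Rightarrow> 'a set \<Rightarrow> bool" where
  "adic_complete (R::('a,'b) ring_scheme) N \<longleftrightarrow>
     (\<forall>s::nat \<Rightarrow> 'a. (\<forall>m. s m \<in> carrier R) \<longrightarrow>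
        (\<forall>k. \<exists>M. \<forall>m\<ge>M. \<forall>m'\<ge>M. s m \<ominus>\<^bsub>R\<^esub> s m' \<in> ideal_pow R N k) \<longrightarrow>
        (\<exists>l\<in>carrier R. \<forall>k. \<exists>M. \<forall>m\<ge>M. s m \<ominus>\<^bsub>R\<^esub> l \<in> ideal_pow R N k))"

definition adic_has_sum ::
  "('a, 'b) ring_scheme \<Rightarrow> 'a set \<Rightarrow> ('c \<Rightarrow> 'a) \<Rightarrow> 'c set \<Rightarrow> 'a \<Rightarrow> bool" where
  "adic_has_sum R N a G f \<longleftrightarrow>
     (\<forall>k. \<exists>F0. finite F0 \<and> F0 \<subseteq> G \<and>
        (\<forall>F. finite F \<and> F0 \<subseteq> F \<and> F \<subseteq> G \<longrightarrow>
           f \<ominus>\<^bsub>R\<^esub> finsum R a F \<in> ideal_pow R N k))"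

text \<open>x_1..x_r (as x 0 .. x (r-1)) is a minimal generating sequence of I:
  it generates I and I has no generating sequence of shorter length.\<close>
definition minimal_gen_seq :: "('a, 'b) ring_scheme \<Rightarrow> 'a set \<Rightarrow> nat \<Rightarrow> (nat \<Rightarrow> 'a) \<Rightarrow> bool" where
  "minimal_gen_seq R I r x \<longleftrightarrow>
     x ` {..<r} \<subseteq> carrier R \<and> I = Idl\<^bsub>R\<^esub> (x ` {..<r}) \<and>
     (\<forall>s y. s < r \<longrightarrow> y ` {..<s} \<subseteq> carrier R \<longrightarrow> I \<noteq> Idl\<^bsub>R\<^esub> (y ` {..<s}))"

text \<open>Monomials in T_1..T_r: exponent vectors u with u i = 0 for i >= r.\<close>
definition monomials :: "nat \<Rightarrow> (nat \<Rightarrow> nat) set" where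
  "monomials r = {u. \<forall>i\<ge>r. u i = 0}"

text \<open>The variable T_(i+1) as an exponent vector.\<close>
definition var_mono :: "nat \<Rightarrow> (nat \<Rightarrow> nat)" where
  "var_mono i = (\<lambda>j. if j = i then 1 else 0)"

definition standard_set :: "nat \<Rightarrow> (nat \<Rightarrow> nat) set \<Rightarrow> bool" where
  "standard_set r G \<longleftrightarrow> G \<subseteq> monomials r \<and>
     (\<forall>u\<in>G. \<forall>v. (\<forall>i. v i \<le> u i) \<longrightarrow> v \<in> G)"

definition eval_mono :: "('a, 'b) ring_scheme \<Rightarrow> nat \<Rightarrow> (nat \<Rightarrow> 'a) \<Rightarrow> (nat \<Rightarrow> nat) \<Rightarrow> 'a" where
  "eval_mono R r x u = finprod R (\<lambda>i. x i [^]\<^bsub>R\<^esub> u i) {..<r}"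

definition lifting :: "('a, 'b) ring_scheme \<Rightarrow> 'a set \<Rightarrow> ('a set \<Rightarrow> 'a) \<Rightarrow> bool" where
  "lifting R I \<sigma> \<longleftrightarrow>
     (\<forall>C\<in>carrier (R Quot I). \<sigma> C \<in> carrier R \<and> I +>\<^bsub>R\<^esub> (\<sigma> C) = C) \<and>
     \<sigma> (\<zero>\<^bsub>R Quot I\<^esub>) = \<zero>\<^bsub>R\<^esub>"

definition expandable ::
  "('a, 'b) ring_scheme \<Rightarrow> 'a set \<Rightarrow> 'a set \<Rightarrow> nat \<Rightarrow> (nat \<Rightarrow> 'a) \<Rightarrow> (nat \<Rightarrow> nat) set \<Rightarrow> bool" where
  "expandable R N I r x G \<longleftrightarrow>
     (\<forall>\<sigma>. lifting R I \<sigma> \<longrightarrow>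
       (\<forall>f\<in>carrier R.
          (\<exists>c. (\<forall>u\<in>G. c u \<in> \<sigma> ` carrier (R Quot I)) \<and>
               adic_has_sum R N (\<lambda>u. c u \<otimes>\<^bsub>R\<^esub> eval_mono R r x u) G f) \<and>
          (\<forall>c c'. (\<forall>u\<in>G. c u \<in> \<sigma> ` carrier (R Quot I)) \<and>
                  adic_has_sum R N (\<lambda>u. c u \<otimes>\<^bsub>R\<^esub> eval_mono R r x u) G f \<and>
                  (\<forall>u\<in>G. c' u \<in> \<sigma> ` carrier (R Quot I)) \<and>
                  adic_has_sum R N (\<lambda>u. c' u \<otimes>\<^bsub>R\<^esub> eval_mono R r x u) G f
                  \<longrightarrow> (\<forall>u\<in>G. c u = c' u))))"

end

theory Submission
  imports Defs
begin

text \<open>Suppose \<open>T\<^sub>i \<notin> \<Gamma>\<close>. Expanding \<open>1\<close> shows \<open>\<Gamma> \<noteq> {}\<close>, so \<open>1 \<in> \<Gamma>\<close>,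
  and since \<open>\<Gamma>\<close> is closed under divisors, every other monomial of \<open>\<Gamma>\<close> involves some
  \<open>x\<^sub>j\<close> with \<open>j \<noteq> i\<close>. Hence the expansion \<open>x\<^sub>i = \<Sum> c\<^sub>u u(x)\<close> gives
  \<open>x\<^sub>i - c\<^sub>1 \<in> J + N\<^sup>k\<close> for all \<open>k\<close>, where \<open>J\<close> is generated by the \<open>x\<^sub>j\<close>, \<open>j \<noteq> i\<close>.
  By Krull's intersection theorem \<open>J\<close> is \<open>N\<close>-adically closed, so \<open>x\<^sub>i - c\<^sub>1 \<in> J \<subseteq> I\<close>.
  Then \<open>c\<^sub>1 \<in> I\<close> is a value of the lifting lying over \<open>0\<close>, i.e. \<open>c\<^sub>1 = 0\<close>, and \<open>x\<^sub>i \<in> J\<close>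
  contradicts the minimality of the generating sequence.\<close>

no_notation Sum_Type.Plus (infixr \<open><+>\<close> 65)

locale noetherian_cring = noetherian_ring + cring

lemma (in noetherian_ring) exists_maximal_ideal_in_family:
  assumes "\<F> \<noteq> {}" "\<F> \<subseteq> {J. ideal J R}"
  shows "\<exists>M\<in>\<F>. \<forall>J\<in>\<F>. M \<subseteq> J \<longrightarrow> J = M"
proof (rule subset_Zorn)
  fix C assume C: "subset.chain \<F> C"
  show "\<exists>U\<in>\<F>. \<forall>J\<in>C. J \<subseteq> U"
  proof (cases "C = {}")
    case True
    then show ?thesis using assms(1) by blast
  next
    case False
    have "subset.chain {J. ideal J R} C"
      using C assms(2) unfolding pred_on.chain_def by auto
    then have "\<Union>C \<in> C"
      using ideal_chain_is_trivial False by simp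
    then show ?thesis
      by (meson C Union_upper pred_on.chain_def subsetD)
  qed
qed

lemma (in noetherian_ring) exists_maximalideal_superset:
  assumes "ideal I R" "\<one> \<notin> I"
  shows "\<exists>M. maximalideal M R \<and> I \<subseteq> M"
proof -
  let ?\<F> = "{J. ideal J R \<and> I \<subseteq> J \<and> \<one> \<notin> J}"
  obtain M where M: "M \<in> ?\<F>" and M_max: "\<forall>J\<in>?\<F>. M \<subseteq> J \<longrightarrow> J = M"
    using exists_maximal_ideal_in_family[of ?\<F>] assms by auto
  have "maximalideal M R"
  proof (rule maximalidealI)
    show "ideal M R" "carrier R \<noteq> M" using M by auto
    show "J = M \<or> J = carrier R" if "ideal J R" "M \<subseteq> J" "J \<subseteq> carrier R" for J
      using that M M_max ideal.one_imp_carrier by fastforce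
  qed
  then show ?thesis using M by auto
qed

lemma (in noetherian_cring) one_minus_Units_of_local:
  assumes "local_ring_with R N" "n \<in> N"
  shows "\<one> \<ominus> n \<in> Units R"
proof (rule ccontr)
  assume not_unit: "\<one> \<ominus> n \<notin> Units R"
  interpret N: maximalideal N R using assms(1) by (simp add: local_ring_with_def)
  have n: "n \<in> carrier R" using assms(2) N.Icarr by simp
  have "\<one> \<notin> PIdl (\<one> \<ominus> n)"
  proof
    assume "\<one> \<in> PIdl (\<one> \<ominus> n)"
    then have "PIdl (\<one> \<ominus> n) = carrier R"
      using ideal.one_imp_carrier[OF cgenideal_ideal] n by simp
    then show False using not_unit ideal_eq_carrier_iff[of "\<one> \<ominus> n"] n by simp
  qed
  then obtain M where "maximalideal M R" "PIdl (\<one> \<ominus> n) \<subseteq> M"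
    using exists_maximalideal_superset[OF cgenideal_ideal, of "\<one> \<ominus> n"] n by auto
  then have "\<one> \<ominus> n \<in> N"
    using assms(1) cgenideal_self n unfolding local_ring_with_def by auto
  then have "(\<one> \<ominus> n) \<oplus> n \<in> N" using assms(2) N.a_closed by simp
  then have "\<one> \<in> N" using n by (simp add: minus_eq a_assoc l_neg)
  then show False using N.I_notcarr N.one_imp_carrier by simp
qed

lemma (in ring) ideal_pow_is_ideal: "ideal N R \<Longrightarrow> ideal (ideal_pow R N k) R"
  by (induct k) (simp_all add: oneideal ideal_prod_is_ideal)

lemma (in ring) ideal_prod_subset:
  assumes "ideal Q R" "\<And>a b. a \<in> A \<Longrightarrow> b \<in> B \<Longrightarrow> a \<otimes> b \<in> Q"
  shows "A \<cdot> B \<subseteq> Q"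
proof
  fix s assume "s \<in> A \<cdot> B"
  then show "s \<in> Q"
    by (induct s rule: ideal_prod.induct)
       (auto simp: assms(2) additive_subgroup.a_closed[OF ideal.axioms(1)[OF assms(1)]])
qed

lemma (in ring) ideal_prod_mono:
  assumes "ideal A' R" "ideal B' R" "A \<subseteq> A'" "B \<subseteq> B'"
  shows "A \<cdot> B \<subseteq> A' \<cdot> B'"
  using assms by (intro ideal_prod_subset ideal_prod_is_ideal) (auto intro: ideal_prod.prod)

lemma (in ring) ideal_pow_mono:
  assumes "ideal A R" "ideal B R" "A \<subseteq> B"
  shows "ideal_pow R A k \<subseteq> ideal_pow R B k"
  by (induct k) (simp_all add: assms ideal_prod_mono ideal_pow_is_ideal)

lemma (in ring) ideal_set_add_upper:
  assumes "ideal I R" "ideal J R"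
  shows "I \<subseteq> I <+> J" and "J \<subseteq> I <+> J"
  using union_genideal[OF assms] genideal_self[of "I \<union> J"] ideal.Icarr[OF assms(1)]
    ideal.Icarr[OF assms(2)] by blast+

lemma (in ring) ideal_mem_of_add_mem:
  assumes "ideal I R" "u \<in> I" "v \<in> carrier R" "u \<oplus> v \<in> I"
  shows "v \<in> I"
proof -
  interpret I: additive_subgroup I R using assms(1) ideal.axioms(1) by blast
  have "v = \<ominus> u \<oplus> (u \<oplus> v)"
    using assms(2,3) I.a_Hcarr by (simp add: a_assoc[symmetric] l_neg)
  then show ?thesis using assms(2,4) I.a_closed I.a_inv_closed by metis
qed

lemma (in ring) set_add_subset_ideal:
  assumes "ideal Q R" "A \<subseteq> Q" "B \<subseteq> Q"
  shows "A <+> B \<subseteq> Q"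
  using assms additive_subgroup.a_closed[OF ideal.axioms(1)[OF assms(1)]]
  unfolding set_add_def' by blast

lemma (in ring) set_add_mono: "A \<subseteq> A' \<Longrightarrow> B \<subseteq> B' \<Longrightarrow> A <+> B \<subseteq> A' <+> B'"
  unfolding set_add_def' by blast

lemma (in ring) carrier_set_add_ideal:
  assumes "ideal B R"
  shows "carrier R <+> B = carrier R"
proof -
  have "carrier R \<union> B = carrier R" using ideal.Icarr[OF assms] by blast
  then show ?thesis
    using union_genideal[OF oneideal assms] genideal_minimal[OF oneideal] genideal_self
    by (metis order_refl subset_antisym)
qed

lemma (in cring) ideal_pow_set_add_subset:
  assumes A: "ideal A R" and B: "ideal B R"
  shows "ideal_pow R (A <+> B) (s + t) \<subseteq> ideal_pow R A s <+> ideal_pow R B t"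
proof (induction "s + t" arbitrary: s t)
  case 0
  then show ?case using carrier_set_add_ideal[OF oneideal] by simp
next
  case (Suc n)
  let ?P = "ideal_pow R (A <+> B) n"
  let ?X = "ideal_pow R A s <+> ideal_pow R B t"
  have AB: "ideal (A <+> B) R" using add_ideals[OF A B] .
  have P: "ideal ?P R" using ideal_pow_is_ideal[OF AB] .
  have pow_A: "ideal (ideal_pow R A k) R" and pow_B: "ideal (ideal_pow R B k) R" for k
    using ideal_pow_is_ideal A B by auto
  consider "s = 0" | "t = 0" | s' t' where "s = Suc s'" "t = Suc t'"
    by (meson not0_implies_Suc)
  then show ?case
  proof cases
    case 1
    then show ?thesis
      using carrier_set_add_ideal[OF pow_B] ideal.Icarr[OF ideal_pow_is_ideal[OF AB]] by auto
  next
    case 2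
    have "ideal_pow R A s \<subseteq> carrier R" using ideal.Icarr[OF pow_A] by blast
    then show ?thesis
      using 2 carrier_set_add_ideal[OF pow_A] set_add_comm[of "ideal_pow R A s" "carrier R"]
        ideal.Icarr[OF ideal_pow_is_ideal[OF AB]] by auto
  next
    case 3
    have "A \<cdot> ?P \<subseteq> A \<cdot> (ideal_pow R A s' <+> ideal_pow R B t)"
      using Suc.hyps(1)[of s' t] Suc.hyps(2) 3 by (intro ideal_prod_mono A add_ideals pow_A pow_B) auto
    also have "\<dots> = A \<cdot> ideal_pow R A s' <+> A \<cdot> ideal_pow R B t"
      using ideal_prod_distr(1) A pow_A pow_B by blast
    also have "\<dots> \<subseteq> ?X"
    proof (rule set_add_mono)
      show "A \<cdot> ideal_pow R A s' \<subseteq> ideal_pow R A s" using 3 by simp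
      show "A \<cdot> ideal_pow R B t \<subseteq> ideal_pow R B t" using ideal_prod_inter[OF A pow_B] by blast
    qed
    finally have A_part: "A \<cdot> ?P \<subseteq> ?X" .
    have "B \<cdot> ?P \<subseteq> B \<cdot> (ideal_pow R A s <+> ideal_pow R B t')"
      using Suc.hyps(1)[of s t'] Suc.hyps(2) 3 by (intro ideal_prod_mono B add_ideals pow_A pow_B) auto
    also have "\<dots> = B \<cdot> ideal_pow R A s <+> B \<cdot> ideal_pow R B t'"
      using ideal_prod_distr(1) B pow_A pow_B by blast
    also have "\<dots> \<subseteq> ?X"
    proof (rule set_add_mono)
      show "B \<cdot> ideal_pow R A s \<subseteq> ideal_pow R A s" using ideal_prod_inter[OF B pow_A] by blast
      show "B \<cdot> ideal_pow R B t' \<subseteq> ideal_pow R B t" using 3 by simp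
    qed
    finally have B_part: "B \<cdot> ?P \<subseteq> ?X" .
    have "ideal_pow R (A <+> B) (s + t) = A \<cdot> ?P <+> B \<cdot> ?P"
      using Suc.hyps(2)[symmetric] ideal_prod_distr(2)[OF P A B] by simp
    then show ?thesis
      using set_add_subset_ideal[OF add_ideals[OF pow_A pow_B] A_part B_part] by simp
  qed
qed

lemma (in cring) cgenideal_ideal_prod:
  assumes "a \<in> carrier R" "b \<in> carrier R"
  shows "(PIdl a) \<cdot> (PIdl b) = PIdl (a \<otimes> b)"
proof -
  have "(PIdl a) \<cdot> (PIdl b) = Idl (PIdl (a \<otimes> b))"
    using ideal_prod_eq_genideal[OF cgenideal_ideal cgenideal_ideal] cgenideal_prod assms by simp
  then show ?thesis
    by (simp add: assms Idl_subset_ideal cgenideal_ideal cgenideal_minimal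
                  genideal_self oneideal subset_antisym)
qed

lemma (in cring) ideal_pow_cgenideal:
  assumes "a \<in> carrier R"
  shows "ideal_pow R (PIdl a) e = PIdl (a [^] e)"
proof (induct e)
  case 0
  show ?case using ideal_eq_carrier_iff[of \<one>] by simp
next
  case (Suc e)
  then show ?case using assms by (simp add: cgenideal_ideal_prod nat_pow_Suc m_comm)
qed

lemma (in ring) genideal_empty: "Idl {} = {\<zero>}"
  using genideal_minimal[OF zeroideal] genideal_ideal[of "{}"]
    additive_subgroup.zero_closed[OF ideal.axioms(1)] by blast

lemma (in cring) ideal_pow_genideal_subset:
  assumes "finite A" "A \<subseteq> carrier R" "ideal Q R" "\<forall>a\<in>A. \<exists>e::nat. a [^] e \<in> Q"
  shows "\<exists>m. ideal_pow R (Idl A) m \<subseteq> Q"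
  using assms
proof (induct A rule: finite_induct)
  case empty
  have "ideal_pow R (Idl {}) 1 = {\<zero>}"
    using ideal_prod_one[OF zeroideal] genideal_empty by simp
  then show ?case using additive_subgroup.zero_closed[OF ideal.axioms(1)[OF empty(2)]]
    by (metis empty_subsetI insert_subset)
next
  case (insert a A)
  obtain m where m: "ideal_pow R (Idl A) m \<subseteq> Q" using insert by auto
  obtain e :: nat where e: "a [^] e \<in> Q" using insert(6) by auto
  have a: "a \<in> carrier R" and A: "ideal (Idl A) R"
    using insert genideal_ideal by auto
  have "Idl (insert a A) \<subseteq> PIdl a <+> Idl A"
  proof (rule genideal_minimal[OF add_ideals[OF cgenideal_ideal[OF a] A]])
    show "insert a A \<subseteq> PIdl a <+> Idl A"
      using union_genideal[OF cgenideal_ideal[OF a] A] genideal_self[of "PIdl a \<union> Idl A"]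
        cgenideal_self[OF a] genideal_self[of A] insert(4) ideal.Icarr[OF cgenideal_ideal[OF a]]
        ideal.Icarr[OF A] by blast
  qed
  then have "ideal_pow R (Idl (insert a A)) (e + m) \<subseteq> ideal_pow R (PIdl a <+> Idl A) (e + m)"
    using insert(4) by (intro ideal_pow_mono genideal_ideal add_ideals cgenideal_ideal a A) auto
  also have "\<dots> \<subseteq> ideal_pow R (PIdl a) e <+> ideal_pow R (Idl A) m"
    using ideal_pow_set_add_subset[OF cgenideal_ideal[OF a] A] .
  also have "\<dots> \<subseteq> Q"
    using set_add_subset_ideal[OF insert(5) cgenideal_minimal[OF insert(5) e] m]
      ideal_pow_cgenideal[OF a] by simp
  finally show ?case by blast
qed

section \<open>Krull's intersection theorem\<close>

definition colon :: "('a, 'b) ring_scheme \<Rightarrow> 'a set \<Rightarrow> 'a \<Rightarrow> 'a set" where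
  "colon R Q a = {x \<in> carrier R. a \<otimes>\<^bsub>R\<^esub> x \<in> Q}"

lemma (in cring) colon_is_ideal: "ideal Q R \<Longrightarrow> a \<in> carrier R \<Longrightarrow> ideal (colon R Q a) R"
  unfolding colon_def by (rule ideal.helper_max_prime) (simp_all add: is_cring)

lemma (in cring) colon_pow_mono:
  assumes "ideal Q R" "a \<in> carrier R" "k \<le> (k' :: nat)"
  shows "colon R Q (a [^] k) \<subseteq> colon R Q (a [^] k')"
proof
  fix x assume "x \<in> colon R Q (a [^] k)"
  then have x: "x \<in> carrier R" "a [^] k \<otimes> x \<in> Q" by (auto simp: colon_def)
  have "a [^] k' \<otimes> x = a [^] (k' - k) \<otimes> (a [^] k \<otimes> x)"
    using assms(2,3) x(1) by (simp add: nat_pow_mult m_assoc[symmetric])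
  then show "x \<in> colon R Q (a [^] k')"
    using ideal.I_l_closed[OF assms(1) x(2)] assms(2) x(1) by (simp add: colon_def)
qed

lemma (in noetherian_cring) colon_pow_stable:
  assumes "ideal Q R" "a \<in> carrier R"
  shows "\<exists>n::nat. \<forall>m\<ge>n. colon R Q (a [^] m) = colon R Q (a [^] n)"
proof -
  let ?\<F> = "(\<lambda>k::nat. colon R Q (a [^] k)) ` UNIV"
  have "?\<F> \<subseteq> {J. ideal J R}" using colon_is_ideal assms by auto
  then obtain C where "C \<in> ?\<F>" and C_max: "\<forall>C'\<in>?\<F>. C \<subseteq> C' \<longrightarrow> C' = C"
    using exists_maximal_ideal_in_family[of ?\<F>] by auto
  then obtain n :: nat where "C = colon R Q (a [^] n)" by auto
  then show ?thesis using C_max colon_pow_mono[OF assms] by (metis rangeI)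
qed

lemma (in cring) set_add_cgenideal_inter_colon:
  assumes Q: "ideal Q R" and a: "a \<in> carrier R"
    and stable: "colon R Q (a [^] (n + n)) = colon R Q (a [^] (n::nat))"
  shows "(Q <+> PIdl (a [^] n)) \<inter> colon R Q (a [^] n) \<subseteq> Q"
proof
  fix z assume "z \<in> (Q <+> PIdl (a [^] n)) \<inter> colon R Q (a [^] n)"
  then obtain y s where y: "y \<in> Q" and s: "s \<in> carrier R" and z_eq: "z = y \<oplus> s \<otimes> a [^] n"
    and az: "a [^] n \<otimes> z \<in> Q"
    unfolding set_add_def' cgenideal_def colon_def by blast
  have an: "a [^] n \<in> carrier R" using a by simp
  have "a [^] n \<otimes> z = a [^] n \<otimes> y \<oplus> a [^] (n + n) \<otimes> s"
    using a s ideal.Icarr[OF Q y] by (simp add: z_eq r_distr nat_pow_mult[symmetric] m_ac)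
  then have "a [^] (n + n) \<otimes> s \<in> Q"
    using az ideal_mem_of_add_mem[OF Q ideal.I_l_closed[OF Q y an]] a s by simp
  then have "a [^] n \<otimes> s \<in> Q"
    using stable s unfolding colon_def by blast
  then have "s \<otimes> a [^] n \<in> Q" using s an by (simp add: m_comm)
  then show "z \<in> Q"
    using z_eq y additive_subgroup.a_closed[OF ideal.axioms(1)[OF Q]] by simp
qed

lemma (in noetherian_cring) pow_mem_of_maximal_avoiding:
  assumes Q: "ideal Q R" and z: "z \<in> carrier R" "z \<notin> Q"
    and Q_max: "\<And>Q'. ideal Q' R \<Longrightarrow> Q \<subseteq> Q' \<Longrightarrow> z \<notin> Q' \<Longrightarrow> Q' = Q"
    and a: "a \<in> carrier R" "a \<otimes> z \<in> Q"
  shows "\<exists>e::nat. a [^] e \<in> Q"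
proof (rule ccontr)
  assume no_pow: "\<nexists>e::nat. a [^] e \<in> Q"
  obtain n0 :: nat where n0: "\<forall>m\<ge>n0. colon R Q (a [^] m) = colon R Q (a [^] n0)"
    using colon_pow_stable[OF Q a(1)] by blast
  define n where "n = Suc n0"
  have stable: "colon R Q (a [^] (n + n)) = colon R Q (a [^] n)"
    using n0[rule_format, of "n + n"] n0[rule_format, of n] unfolding n_def by simp
  have an: "a [^] n \<in> carrier R" using a(1) by simp
  have "z \<in> Q <+> PIdl (a [^] n)"
  proof (rule ccontr)
    assume "z \<notin> Q <+> PIdl (a [^] n)"
    then have "Q <+> PIdl (a [^] n) = Q"
      using Q_max add_ideals[OF Q cgenideal_ideal[OF an]]
        ideal_set_add_upper(1)[OF Q cgenideal_ideal[OF an]] by blast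
    then show False
      using no_pow ideal_set_add_upper(2)[OF Q cgenideal_ideal[OF an]] cgenideal_self[OF an] by blast
  qed
  moreover have "a [^] n \<otimes> z = a [^] n0 \<otimes> (a \<otimes> z)"
    using a(1) z by (simp add: n_def m_assoc)
  then have "z \<in> colon R Q (a [^] n)"
    using ideal.I_l_closed[OF Q a(2)] a(1) z(1) by (simp add: colon_def)
  ultimately show False
    using set_add_cgenideal_inter_colon[OF Q a(1) stable] z(2) by blast
qed

lemma (in cring) mem_ideal_prod_cgenideal:
  assumes N: "ideal N R" and z: "z \<in> carrier R" and w: "w \<in> N \<cdot> (PIdl z)"
  shows "\<exists>n\<in>N. w = n \<otimes> z"
  using w
proof (induct w rule: ideal_prod.induct)
  case (prod i j)
  then obtain s where s: "s \<in> carrier R" "j = s \<otimes> z" by (auto simp: cgenideal_def)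
  have "i \<otimes> j = (i \<otimes> s) \<otimes> z" using s z ideal.Icarr[OF N prod(1)] by (simp add: m_assoc)
  then show ?case using ideal.I_r_closed[OF N prod(1) s(1)] by blast
next
  case (sum w1 w2)
  then obtain n1 n2 where "n1 \<in> N" "n2 \<in> N" "w1 = n1 \<otimes> z" "w2 = n2 \<otimes> z" by blast
  then show ?case
    using z ideal.Icarr[OF N] additive_subgroup.a_closed[OF ideal.axioms(1)[OF N]]
    by (metis l_distr)
qed

text \<open>An ideal \<open>Q\<close> maximal among those containing \<open>J + N z\<close> but not \<open>z\<close> contains a power of
  every element of \<open>N\<close>, hence a power of the finitely generated ideal \<open>N\<close>; but \<open>z \<in> J + N\<^sup>m\<close>.\<close>

lemma (in noetherian_cring) krull_intersection:
  assumes N: "ideal N R" and J: "ideal J R" and z: "z \<in> carrier R"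
    and adic: "\<And>k. z \<in> J <+> ideal_pow R N k"
  shows "z \<in> J <+> N \<cdot> (PIdl z)"
proof (rule ccontr)
  define P where "P = J <+> N \<cdot> (PIdl z)"
  assume "z \<notin> J <+> N \<cdot> (PIdl z)"
  then have z_P: "z \<notin> P" unfolding P_def .
  have NZ: "ideal (N \<cdot> (PIdl z)) R" using ideal_prod_is_ideal[OF N cgenideal_ideal[OF z]] .
  have P: "ideal P R" unfolding P_def using add_ideals[OF J NZ] .
  obtain Q where Q: "ideal Q R" "P \<subseteq> Q" "z \<notin> Q"
    and Q_max: "\<forall>Q'\<in>{Q. ideal Q R \<and> P \<subseteq> Q \<and> z \<notin> Q}. Q \<subseteq> Q' \<longrightarrow> Q' = Q"
    using exists_maximal_ideal_in_family[of "{Q. ideal Q R \<and> P \<subseteq> Q \<and> z \<notin> Q}"] P z_P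
    by auto
  have "\<exists>e::nat. a [^] e \<in> Q" if a: "a \<in> N" for a
  proof (rule pow_mem_of_maximal_avoiding[OF Q(1) z Q(3)])
    show "\<And>Q'. ideal Q' R \<Longrightarrow> Q \<subseteq> Q' \<Longrightarrow> z \<notin> Q' \<Longrightarrow> Q' = Q"
      using Q_max Q(2) by blast
    show a_carr: "a \<in> carrier R" using ideal.Icarr[OF N a] .
    have "a \<otimes> z \<in> N \<cdot> (PIdl z)" using a cgenideal_self[OF z] by (rule ideal_prod.prod)
    then show "a \<otimes> z \<in> Q"
      using ideal_set_add_upper(2)[OF J NZ] Q(2) unfolding P_def by blast
  qed
  moreover obtain A where A: "A \<subseteq> carrier R" "finite A" "N = Idl A"
    using finetely_gen[OF N] by blast
  ultimately obtain m where "ideal_pow R N m \<subseteq> Q"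
    using ideal_pow_genideal_subset[OF A(2,1) Q(1)] genideal_self[OF A(1)] by blast
  then have "J <+> ideal_pow R N m \<subseteq> Q"
    using set_add_subset_ideal[OF Q(1)] ideal_set_add_upper(1)[OF J NZ] Q(2)
    unfolding P_def by blast
  then show False using adic Q(3) by blast
qed

lemma (in noetherian_cring) ideal_adic_closed:
  assumes local: "local_ring_with R N" and J: "ideal J R" and z: "z \<in> carrier R"
    and adic: "\<And>k. z \<in> J <+> ideal_pow R N k"
  shows "z \<in> J"
proof -
  have N: "ideal N R" using local by (simp add: local_ring_with_def maximalideal_def)
  obtain j w where j: "j \<in> J" and w: "w \<in> N \<cdot> (PIdl z)" and z_eq: "z = j \<oplus> w"
    using krull_intersection[OF N J z adic] unfolding set_add_def' by blast
  obtain n where n: "n \<in> N" "w = n \<otimes> z"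
    using mem_ideal_prod_cgenideal[OF N z w] by blast
  have nc: "n \<in> carrier R" and jc: "j \<in> carrier R"
    using ideal.Icarr[OF N n(1)] ideal.Icarr[OF J j] by auto
  have unit: "\<one> \<ominus> n \<in> Units R" using one_minus_Units_of_local[OF local n(1)] .
  have wc: "w \<in> carrier R" using n(2) nc z by simp
  have "(\<one> \<ominus> n) \<otimes> z = z \<oplus> \<ominus> w"
    using n(2) nc z by (simp add: minus_eq l_distr l_minus)
  also have "\<dots> = j" using z_eq jc wc by (simp add: a_assoc r_neg)
  finally have j_eq: "(\<one> \<ominus> n) \<otimes> z = j" .
  have "z = inv (\<one> \<ominus> n) \<otimes> j"
    using unit z unfolding j_eq[symmetric]
    by (simp add: m_assoc[symmetric] Units_l_inv Units_closed Units_inv_closed)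
  then show ?thesis using ideal.I_l_closed[OF J j] unit by simp
qed

section \<open>Expansions in monomials\<close>

lemma (in ring) finsum_in_ideal:
  assumes J: "ideal J R" and "finite F" "\<And>u. u \<in> F \<Longrightarrow> g u \<in> J"
  shows "finsum R g F \<in> J"
  using assms(2,3)
proof (induct F rule: finite_induct)
  case empty
  then show ?case using additive_subgroup.zero_closed[OF ideal.axioms(1)[OF J]] by simp
next
  case (insert u F)
  then have "finsum R g (insert u F) = g u \<oplus> finsum R g F"
    using ideal.Icarr[OF J] by (intro finsum_insert) auto
  then show ?case using insert additive_subgroup.a_closed[OF ideal.axioms(1)[OF J]] by simp
qed

lemma (in cring) eval_mono_in_ideal:
  assumes J: "ideal J R" and x: "x ` {..<r} \<subseteq> carrier R"
    and j: "j < r" "u j \<noteq> 0" "x j \<in> J"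
  shows "eval_mono R r x u \<in> J"
proof -
  have rest: "(\<lambda>i. x i [^] u i) \<in> {..<r} - {j} \<rightarrow> carrier R" using x by auto
  have split: "{..<r} = insert j ({..<r} - {j})" using j(1) by auto
  have "eval_mono R r x u = x j [^] u j \<otimes> finprod R (\<lambda>i. x i [^] u i) ({..<r} - {j})"
    unfolding eval_mono_def using j(1) x by (subst split) (rule finprod_insert[OF _ _ rest], auto)
  moreover have "x j [^] u j \<in> J"
    using j x ideal.I_l_closed[OF J j(3)] by (cases "u j") auto
  ultimately show ?thesis using ideal.I_r_closed[OF J] finprod_closed[OF rest] by simp
qed

lemma standard_set_var_free:
  assumes "standard_set r G" "var_mono i \<notin> G" "u \<in> G"
  shows "u i = 0"
proof (rule ccontr)
  assume "u i \<noteq> 0"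
  then have "\<forall>j. var_mono i j \<le> u j" by (simp add: var_mono_def)
  moreover have "\<forall>v. (\<forall>j. v j \<le> u j) \<longrightarrow> v \<in> G"
    using assms(1,3) unfolding standard_set_def by simp
  ultimately show False using assms(2) by simp
qed

lemma adic_has_sum_approx:
  assumes "adic_has_sum R N a G f" "finite F1" "F1 \<subseteq> G"
  shows "\<exists>F. finite F \<and> F1 \<subseteq> F \<and> F \<subseteq> G \<and> f \<ominus>\<^bsub>R\<^esub> finsum R a F \<in> ideal_pow R N k"
proof -
  obtain F0 where F0: "finite F0" "F0 \<subseteq> G" and close:
    "\<And>F. finite F \<Longrightarrow> F0 \<subseteq> F \<Longrightarrow> F \<subseteq> G \<Longrightarrow> f \<ominus>\<^bsub>R\<^esub> finsum R a F \<in> ideal_pow R N k"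
    using assms(1) unfolding adic_has_sum_def by meson
  have "f \<ominus>\<^bsub>R\<^esub> finsum R a (F0 \<union> F1) \<in> ideal_pow R N k"
    using F0 assms(2,3) by (intro close) auto
  then show ?thesis using F0 assms(2,3) by (intro exI[of _ "F0 \<union> F1"]) simp
qed

lemma (in cring) adic_has_sum_mod_ideal:
  assumes J: "ideal J R" and sum: "adic_has_sum R N a G f" and f: "f \<in> carrier R"
    and u0: "u0 \<in> G" and a: "a \<in> G \<rightarrow> carrier R"
    and others: "\<And>u. u \<in> G \<Longrightarrow> u \<noteq> u0 \<Longrightarrow> a u \<in> J"
  shows "f \<ominus> a u0 \<in> J <+> ideal_pow R N k"
proof -
  obtain F where F: "finite F" "u0 \<in> F" "F \<subseteq> G" and approx: "f \<ominus> finsum R a F \<in> ideal_pow R N k"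
    using adic_has_sum_approx[OF sum, of "{u0}"] u0 by auto
  define s where "s = finsum R a (F - {u0})"
  have s: "s \<in> J" unfolding s_def using F others by (intro finsum_in_ideal J) auto
  have sc: "s \<in> carrier R" using ideal.Icarr[OF J s] .
  have "finsum R a F = finsum R a (insert u0 (F - {u0}))" using F(2) by (simp add: insert_absorb)
  also have "\<dots> = a u0 \<oplus> s" unfolding s_def using F a by (intro finsum_insert) auto
  finally have split: "finsum R a F = a u0 \<oplus> s" .
  have "a u0 \<in> carrier R" using a u0 by auto
  then have "f \<ominus> a u0 = s \<oplus> (f \<ominus> (a u0 \<oplus> s))" using f sc by algebra
  then have "f \<ominus> a u0 = s \<oplus> (f \<ominus> finsum R a F)" unfolding split .
  then show ?thesis using s approx unfolding set_add_def' by blast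
qed

lemma (in cring) expansion_constant_term_mod:
  assumes std: "standard_set r G" and not_var: "var_mono i \<notin> G"
    and x: "x ` {..<r} \<subseteq> carrier R" and const: "(\<lambda>_. 0) \<in> G" and c: "c \<in> G \<rightarrow> carrier R"
    and sum: "adic_has_sum R N (\<lambda>u. c u \<otimes> eval_mono R r x u) G f" and f: "f \<in> carrier R"
  shows "f \<ominus> c (\<lambda>_. 0) \<in> Idl (x ` ({..<r} - {i})) <+> ideal_pow R N k"
proof -
  let ?J = "Idl (x ` ({..<r} - {i}))"
  have J: "ideal ?J R" using x by (intro genideal_ideal) auto
  have eval: "eval_mono R r x u \<in> carrier R" for u
    unfolding eval_mono_def using x by (intro finprod_closed) auto
  have "c u \<otimes> eval_mono R r x u \<in> ?J" if u: "u \<in> G" "u \<noteq> (\<lambda>_. 0)" for u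
  proof -
    obtain j where j: "u j \<noteq> 0" using u(2) by auto
    have "u \<in> monomials r" using std u(1) unfolding standard_set_def by (meson subsetD)
    have "j < r"
    proof (rule ccontr)
      assume "\<not> j < r"
      then have "u j = 0" using \<open>u \<in> monomials r\<close> by (simp add: monomials_def)
      then show False using j by simp
    qed
    moreover have "j \<noteq> i" using j standard_set_var_free[OF std not_var u(1)] by auto
    ultimately have "x j \<in> x ` ({..<r} - {i})" by simp
    then have "x j \<in> ?J" using x genideal_self[of "x ` ({..<r} - {i})"] by (meson Diff_subset image_mono subset_trans subsetD)
    then have "eval_mono R r x u \<in> ?J" using eval_mono_in_ideal[where u = u, OF J x \<open>j < r\<close> j] by simp
    moreover have "c u \<in> carrier R" using c u(1) by (rule funcset_mem)
    ultimately show ?thesis using ideal.I_l_closed[OF J] by simp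
  qed
  then have "f \<ominus> c (\<lambda>_. 0) \<otimes> eval_mono R r x (\<lambda>_. 0) \<in> ?J <+> ideal_pow R N k"
    using c eval by (intro adic_has_sum_mod_ideal[OF J sum f const]) auto
  then show ?thesis using funcset_mem[OF c const] by (simp add: eval_mono_def)
qed

lemma (in ring) lifting_exists:
  assumes I: "ideal I R"
  shows "\<exists>lift. lifting R I lift"
proof -
  define lift where "lift C = (if C = I then \<zero> else (SOME a. a \<in> carrier R \<and> I +> a = C))" for C
  have "lift C \<in> carrier R \<and> I +> lift C = C" if "C \<in> carrier (R Quot I)" for C
  proof (cases "C = I")
    case True
    then show ?thesis
      unfolding lift_def using a_rcos_zero[OF I additive_subgroup.zero_closed[OF ideal.axioms(1)[OF I]]]
      by simp
  next
    case False
    have "\<exists>a. a \<in> carrier R \<and> I +> a = C"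
      using that unfolding FactRing_def A_RCOSETS_def' by auto
    then show ?thesis unfolding lift_def using False someI_ex by simp
  qed
  moreover have "lift \<zero>\<^bsub>R Quot I\<^esub> = \<zero>" unfolding lift_def FactRing_def by simp
  ultimately show ?thesis unfolding lifting_def by blast
qed

lemma lifting_closed:
  assumes "lifting R I lift" "c \<in> lift ` carrier (R Quot I)"
  shows "c \<in> carrier R"
  using assms unfolding lifting_def by blast

lemma (in ring) lifting_eq_zero_of_mem:
  assumes I: "ideal I R" and lift: "lifting R I lift" and c: "c \<in> lift ` carrier (R Quot I)" "c \<in> I"
  shows "c = \<zero>"
proof -
  obtain C where C: "C \<in> carrier (R Quot I)" "c = lift C" using c(1) by blast
  have "C = I +> c" using lift C unfolding lifting_def by simp
  also have "\<dots> = \<zero>\<^bsub>R Quot I\<^esub>" using a_rcos_zero[OF I c(2)] by (simp add: FactRing_def)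
  finally show ?thesis using lift C(2) unfolding lifting_def by simp
qed

lemma expandable_expansion:
  assumes "expandable R N I r x G" "lifting R I lift" "f \<in> carrier R"
  shows "\<exists>c. (\<forall>u\<in>G. c u \<in> lift ` carrier (R Quot I)) \<and>
             adic_has_sum R N (\<lambda>u. c u \<otimes>\<^bsub>R\<^esub> eval_mono R r x u) G f"
  using assms unfolding expandable_def by blast

lemma (in ring) expandable_const_mono_mem:
  assumes I: "ideal I R" and N: "ideal N R" "\<one> \<notin> N"
    and std: "standard_set r G" and exp: "expandable R N I r x G"
  shows "(\<lambda>_. 0) \<in> G"
proof -
  have "G \<noteq> {}"
  proof
    assume G: "G = {}"
    obtain lift where "lifting R I lift" using lifting_exists[OF I] by blast
    then obtain c where "adic_has_sum R N (\<lambda>u. c u \<otimes> eval_mono R r x u) G \<one>"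
      using expandable_expansion[OF exp] by blast
    then have "\<one> \<ominus> finsum R (\<lambda>u. c u \<otimes> eval_mono R r x u) {} \<in> ideal_pow R N 1"
      using adic_has_sum_approx[of R N _ G \<one> "{}" 1] G by auto
    then have "\<one> \<in> N" using ideal_prod_one[OF N(1)] by (simp add: minus_eq)
    then show False using N(2) by simp
  qed
  then obtain u where "u \<in> G" by blast
  moreover have "\<forall>v. (\<forall>j. v j \<le> u j) \<longrightarrow> v \<in> G"
    using std \<open>u \<in> G\<close> unfolding standard_set_def by simp
  ultimately show ?thesis by simp
qed

lemma (in ring) minimal_gen_seq_generator_notin:
  assumes min: "minimal_gen_seq R I r x" and i: "i < r"
  shows "x i \<notin> Idl (x ` ({..<r} - {i}))"
proof
  let ?J = "Idl (x ` ({..<r} - {i}))"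
  assume x_i: "x i \<in> ?J"
  have x: "x ` {..<r} \<subseteq> carrier R" and I: "I = Idl (x ` {..<r})"
    and shorter: "\<And>s y. s < r \<Longrightarrow> y ` {..<s} \<subseteq> carrier R \<Longrightarrow> I \<noteq> Idl (y ` {..<s})"
    using min unfolding minimal_gen_seq_def by blast+
  have sub: "x ` ({..<r} - {i}) \<subseteq> carrier R" using x by auto
  have "x ` {..<r} \<subseteq> ?J"
    using x_i genideal_self[OF sub] by auto
  then have "I \<subseteq> ?J" using I genideal_minimal[OF genideal_ideal[OF sub]] by simp
  moreover have "?J \<subseteq> I" using I subset_Idl_subset[OF x, of "x ` ({..<r} - {i})"] by auto
  ultimately have I_eq: "I = ?J" by (rule antisym)
  have "(\<lambda>k. if k < i then k else Suc k) ` {..<r - 1} = {..<r} - {i}"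
  proof (intro equalityI subsetI)
    fix j assume "j \<in> {..<r} - {i}"
    then show "j \<in> (\<lambda>k. if k < i then k else Suc k) ` {..<r - 1}"
      using i by (cases "j < i") (auto intro!: image_eqI[where x = "j - 1"])
  qed (use i in auto)
  then have "x ` ({..<r} - {i}) = (\<lambda>k. x (if k < i then k else Suc k)) ` {..<r - 1}"
    by (metis image_image)
  then show False
    using I_eq shorter[of "r - 1" "\<lambda>k. x (if k < i then k else Suc k)"] i sub by auto
qed

lemma (in noetherian_cring) expandable_var_mono_mem:
  assumes local: "local_ring_with R N" and I_ideal: "ideal I R" and min: "minimal_gen_seq R I r x"
    and std: "standard_set r G" and exp: "expandable R N I r x G" and i: "i < r"
  shows "var_mono i \<in> G"
proof (rule ccontr)
  assume not_var: "var_mono i \<notin> G"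
  let ?J = "Idl (x ` ({..<r} - {i}))"
  have N: "ideal N R" "\<one> \<notin> N"
    using local maximalideal.I_notcarr ideal.one_imp_carrier
    unfolding local_ring_with_def maximalideal_def by blast+
  have x: "x ` {..<r} \<subseteq> carrier R" and I: "I = Idl (x ` {..<r})"
    using min unfolding minimal_gen_seq_def by blast+
  have x_i: "x i \<in> carrier R" "x i \<in> I" using x i I genideal_self[OF x] by auto
  have J: "ideal ?J R" "?J \<subseteq> I"
    using x I genideal_ideal[of "x ` ({..<r} - {i})"] subset_Idl_subset[OF x, of "x ` ({..<r} - {i})"]
    by auto
  obtain lift where lift: "lifting R I lift" using lifting_exists[OF I_ideal] by blast
  obtain c where c: "\<forall>u\<in>G. c u \<in> lift ` carrier (R Quot I)"
    and sum: "adic_has_sum R N (\<lambda>u. c u \<otimes> eval_mono R r x u) G (x i)"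
    using expandable_expansion[OF exp lift x_i(1)] by blast
  have const: "(\<lambda>_. 0) \<in> G" using expandable_const_mono_mem[OF I_ideal N std exp] .
  have c_carr: "c \<in> G \<rightarrow> carrier R" using lifting_closed[OF lift] c by blast
  have c0: "c (\<lambda>_. 0) \<in> carrier R" using c_carr const by blast
  have diff: "x i \<ominus> c (\<lambda>_. 0) \<in> ?J"
    using ideal_adic_closed[OF local J(1)] expansion_constant_term_mod[OF std not_var x const c_carr sum x_i(1)]
      x_i(1) c0 by simp
  then have "x i \<ominus> c (\<lambda>_. 0) \<in> I" using J(2) by (rule rev_subsetD)
  moreover have "(x i \<ominus> c (\<lambda>_. 0)) \<oplus> c (\<lambda>_. 0) = x i"
    using x_i(1) c0 by (simp add: minus_eq a_assoc l_neg)
  ultimately have "c (\<lambda>_. 0) \<in> I" using ideal_mem_of_add_mem[OF I_ideal _ c0] x_i(2) by simp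
  then have "c (\<lambda>_. 0) = \<zero>" by (rule lifting_eq_zero_of_mem[OF I_ideal lift bspec[OF c const]])
  then have "x i \<in> ?J" using diff x_i(1) by (simp add: minus_eq)
  then show False using minimal_gen_seq_generator_notin[OF min i] by contradiction
qed

theorem proposition3p12:
  fixes S :: "('a, 'b) ring_scheme" and N I :: "'a set" and r :: nat
    and x :: "nat \<Rightarrow> 'a" and G :: "(nat \<Rightarrow> nat) set"
  assumes "noetherian_ring S"
    and "local_ring_with S N"
    and "adic_complete S N"
    and "ideal I S"
    and "minimal_gen_seq S I r x"
    and "standard_set r G"
    and "expandable S N I r x G"
  shows "\<forall>i<r. var_mono i \<in> G"
proof -
  interpret noetherian_cring S
    using assms(1,2) by (simp add: noetherian_cring_def local_ring_with_def)
  show ?thesis using expandable_var_mono_mem[OF assms(2,4-7)] by blast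
qed

end
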